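(* If there exists a Heffter space with $v$ points and $r$ parallel classes (over some abelian group of order $2v+1$) which is a linear space, then every prime divisor of $2v+1$ divides $r-1$.
   Context: A half-set of an abelian group $G$ of odd order $2v+1\ge7$ is a subset $V\subseteq G\setminus\{0\}$ containing exactly one element of each pair $\{g,-g\}$, $g\ne0$. A Heffter system on $V$ with block size $k$ is a partition of $V$ into blocks of size $k$, each summing to $0$ in $G$. A Heffter space over $G$ is a partial linear space (any two distinct points in at most one block) with point set a half-set $V$ of $G$, together with a resolution (partition of its blocks into parallel classes, each partitioning $V$) in which every parallel class is a Heffter system on $V$. It is a linear space if any two distinct points lie in exactly one block. *)

theory Defs
  imports Main "HOL-Library.Disjoint_Sets" "HOL-Computational_Algebra.Primes"
begin

text \<open>The abelian group G is the universe of a finite type of class ab_group_add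
  (written additively, neutral element 0).\<close>

definition half_set :: "'a::ab_group_add set \<Rightarrow> bool" where
  "half_set V \<longleftrightarrow> V \<subseteq> UNIV - {0} \<and> (\<forall>g. g \<noteq> 0 \<longrightarrow> (g \<in> V \<longleftrightarrow> - g \<notin> V))"

definition heffter_system :: "'a::ab_group_add set \<Rightarrow> nat \<Rightarrow> 'a set set \<Rightarrow> bool" where
  "heffter_system V k C \<longleftrightarrow> partition_on V C \<and>
     (\<forall>B\<in>C. finite B \<and> card B = k \<and> \<Sum>B = 0)"

text \<open>A Heffter space with point set V, block size k and resolution into the r parallel
  classes P 0, ..., P (r-1) (pairwise disjoint as sets of blocks); the blocks are the
  union of the parallel classes.\<close>
definition blocks :: "(nat \<Rightarrow> 'a set set) \<Rightarrow> nat \<Rightarrow> 'a set set" where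
  "blocks P r = (\<Union>i<r. P i)"

definition heffter_space :: "'a::ab_group_add set \<Rightarrow> nat \<Rightarrow> (nat \<Rightarrow> 'a set set) \<Rightarrow> nat \<Rightarrow> bool" where
  "heffter_space V k P r \<longleftrightarrow> half_set V \<and>
     (\<forall>i<r. heffter_system V k (P i)) \<and>
     (\<forall>i<r. \<forall>j<r. i \<noteq> j \<longrightarrow> P i \<inter> P j = {}) \<and>
     (\<forall>x\<in>V. \<forall>y\<in>V. x \<noteq> y \<longrightarrow>
        (\<forall>B\<in>blocks P r. \<forall>B'\<in>blocks P r. x \<in> B \<and> y \<in> B \<and> x \<in> B' \<and> y \<in> B' \<longrightarrow> B = B'))"

definition is_linear_space :: "'a set \<Rightarrow> 'a set set \<Rightarrow> bool" where
  "is_linear_space V \<B> \<longleftrightarrow> (\<forall>x\<in>V. \<forall>y\<in>V. x \<noteq> y \<longrightarrow> (\<exists>!B. B \<in> \<B> \<and> x \<in> B \<and> y \<in> B))"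

end

theory Submission
  imports Defs "HOL-Algebra.Sylow" "HOL-Algebra.Multiplicative_Group"
begin

text \<open>Fix a point x. In every parallel class exactly one block passes through x, and since the
  space is linear these r blocks, with x removed, partition the other points. Every class
  partitions V into zero-sum blocks, so the sum of all points is 0, and summing over the pencil
  of x gives -x = r(-x), i.e. (r-1)x = 0. The half-set contains x or -x for every g \<noteq> 0, so
  r-1 annihilates the whole group. A prime p dividing 2v+1 is the order of some element
  (Cauchy, here from Sylow's theorem), hence p divides r-1.\<close>

definition additive_group :: "'a::ab_group_add monoid" where
  "additive_group = \<lparr>carrier = UNIV, mult = (+), one = 0\<rparr>"

lemma group_additive_group: "group additive_group"
  unfolding additive_group_def
  by (rule groupI) (auto simp: add.assoc intro: exI[of _ "- _"])

lemma carrier_additive_group [simp]: "carrier additive_group = UNIV"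
  and one_additive_group [simp]: "\<one>\<^bsub>additive_group\<^esub> = 0"
  by (simp_all add: additive_group_def)

lemma nat_pow_additive_group: "x [^]\<^bsub>additive_group\<^esub> (n::nat) = (\<Sum>i<n. x)"
  by (induction n) (simp_all add: additive_group_def)

lemma (in group) prime_dvd_exponent:
  assumes "finite (carrier G)" "prime p" "p dvd order G"
    and exponent: "\<And>x. x \<in> carrier G \<Longrightarrow> x [^] m = \<one>"
  shows "p dvd m"
proof -
  have "order G = p ^ 1 * (order G div p)"
    using assms(3) by simp
  then have "\<exists>H. subgroup H G \<and> card H = p ^ 1"
    by (rule sylow_thm[OF assms(2) is_group _ assms(1)])
  then obtain H where H: "subgroup H G" "card H = p"
    by auto
  interpret H: group "G\<lparr>carrier := H\<rparr>"
    using subgroup_imp_group[OF H(1)] .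
  have "H \<noteq> {\<one>}"
    using H(2) prime_gt_1_nat[OF assms(2)] by auto
  then obtain x where x: "x \<in> H" "x \<noteq> \<one>"
    using subgroup.one_closed[OF H(1)] by blast
  have x_carrier: "x \<in> carrier G"
    using subgroup.subset[OF H(1)] x(1) by blast
  have "x [^] p = \<one>"
    using H.pow_order_eq_1[of x] x(1) H(2) nat_pow_consistent
    by (simp add: order_def)
  then have "ord x dvd p"
    using pow_eq_id[OF x_carrier] by blast
  moreover have "ord x \<noteq> 1"
    using ord_eq_1[OF x_carrier] x(2) by blast
  ultimately have "ord x = p"
    using assms(2) prime_nat_iff by blast
  then show "p dvd m"
    using pow_eq_id[OF x_carrier] exponent[OF x_carrier] by simp
qed

lemma prime_dvd_card_imp_dvd_exponent:
  assumes "\<And>x::'a::{ab_group_add, finite}. (\<Sum>i<m. x) = 0"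
    and "prime p" "p dvd card (UNIV :: 'a set)"
  shows "p dvd m"
proof (rule group.prime_dvd_exponent[OF group_additive_group])
  show "p dvd order (additive_group :: 'a monoid)"
    using assms(3) by (simp add: order_def)
qed (use assms in \<open>simp_all add: nat_pow_additive_group\<close>)

lemma half_set_exponent:
  fixes V :: "'a::ab_group_add set" and g :: 'a
  assumes "half_set V" "\<And>x. x \<in> V \<Longrightarrow> (\<Sum>i<m. x) = 0"
  shows "(\<Sum>i<m. g) = 0"
proof (cases "g = 0 \<or> g \<in> V")
  case True
  then show ?thesis using assms(2) by auto
next
  case False
  then have "- g \<in> V"
    using assms(1) by (auto simp: half_set_def)
  then show ?thesis
    using assms(2)[of "- g"] by (simp add: sum_negf)
qed

lemma heffter_system_sum_eq_0:
  assumes "heffter_system V k C"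
  shows "\<Sum>V = 0"
proof -
  have "partition_on V C" "\<forall>B\<in>C. finite B \<and> \<Sum>B = 0"
    using assms by (auto simp: heffter_system_def)
  then have "\<Sum>(\<Union>C) = (\<Sum>B\<in>C. \<Sum>B)"
    using sum.Union_disjoint[of C "\<lambda>x. x"] by (auto simp: partition_on_def disjoint_def)
  then show ?thesis
    using \<open>partition_on V C\<close> \<open>\<forall>B\<in>C. finite B \<and> \<Sum>B = 0\<close> by (simp add: partition_on_def)
qed

lemma heffter_space_pencil:
  assumes hs: "heffter_space V k P r" and lin: "is_linear_space V (blocks P r)"
    and x: "x \<in> V" and B: "\<forall>i<r. B i \<in> P i \<and> x \<in> B i"
  shows "V - {x} = (\<Union>i<r. B i - {x})"
    and "disjoint_family_on (\<lambda>i. B i - {x}) {..<r}"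
proof -
  have part: "\<And>i. i < r \<Longrightarrow> partition_on V (P i)"
    using hs by (auto simp: heffter_space_def heffter_system_def)
  have partial_linear: "\<And>y C C'. \<lbrakk>x \<in> V; y \<in> V; x \<noteq> y; C \<in> blocks P r; C' \<in> blocks P r;
      x \<in> C; y \<in> C; x \<in> C'; y \<in> C'\<rbrakk> \<Longrightarrow> C = C'"
    using hs unfolding heffter_space_def by blast
  have B_blocks: "\<And>i. i < r \<Longrightarrow> B i \<in> blocks P r"
    using B by (auto simp: blocks_def)
  have B_sub: "\<And>i. i < r \<Longrightarrow> B i \<subseteq> V"
    using B part by (metis Union_upper partition_onD1)
  show "V - {x} = (\<Union>i<r. B i - {x})"
  proof (intro equalityI subsetI)
    fix y assume y: "y \<in> V - {x}"
    then have "\<exists>C. C \<in> blocks P r \<and> x \<in> C \<and> y \<in> C"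
      using lin x unfolding is_linear_space_def by blast
    then obtain C where C: "C \<in> blocks P r" "x \<in> C" "y \<in> C"
      by blast
    then obtain i where i: "i < r" "C \<in> P i"
      by (auto simp: blocks_def)
    have "C = B i"
      using disjointD[OF partition_onD2[OF part[OF i(1)]] i(2)] B i(1) C(2) by blast
    then show "y \<in> (\<Union>i<r. B i - {x})"
      using i(1) C(3) y by blast
  qed (use B_sub in blast)
  show "disjoint_family_on (\<lambda>i. B i - {x}) {..<r}"
    unfolding disjoint_family_on_def
  proof (intro ballI impI, rule ccontr)
    fix i j assume ij: "i \<in> {..<r}" "j \<in> {..<r}" "i \<noteq> j"
      and "(B i - {x}) \<inter> (B j - {x}) \<noteq> {}"
    then obtain y where y: "y \<in> B i" "y \<in> B j" "y \<noteq> x" by blast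
    have "B i = B j"
      using partial_linear[OF x _ y(3)[symmetric] B_blocks B_blocks] B_sub B ij y(1,2) by blast
    then have "B i \<in> P i \<inter> P j"
      using B ij by (metis IntI lessThan_iff)
    then show False
      using hs ij unfolding heffter_space_def by blast
  qed
qed

lemma heffter_linear_space_point_multiple:
  fixes V :: "'a::ab_group_add set"
  assumes "finite V" and hs: "heffter_space V k P r" and lin: "is_linear_space V (blocks P r)"
    and x: "x \<in> V" and "r > 0"
  shows "(\<Sum>i<r. x) = x"
proof -
  have part: "\<And>i. i < r \<Longrightarrow> partition_on V (P i)"
    and block: "\<And>i C. i < r \<Longrightarrow> C \<in> P i \<Longrightarrow> finite C \<and> \<Sum>C = 0"
    using hs by (auto simp: heffter_space_def heffter_system_def)
  have "\<forall>i<r. \<exists>C. C \<in> P i \<and> x \<in> C"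
    using part x by (metis UnionE partition_onD1)
  then obtain B where B: "\<forall>i<r. B i \<in> P i \<and> x \<in> B i"
    by metis
  have "\<Sum>V = 0"
    using heffter_system_sum_eq_0 hs \<open>r > 0\<close> by (auto simp: heffter_space_def)
  then have "- x = \<Sum>(V - {x})"
    using \<open>finite V\<close> x by (simp add: sum_diff1)
  also have "\<dots> = (\<Sum>i<r. \<Sum>(B i - {x}))"
    unfolding heffter_space_pencil(1)[OF hs lin x B]
    using heffter_space_pencil(2)[OF hs lin x B] B block
    by (intro sum.UNION_disjoint_family) auto
  also have "\<dots> = (\<Sum>i<r. - x)"
    using B block by (intro sum.cong) (simp_all add: sum_diff1)
  finally show ?thesis
    by (simp add: sum_negf)
qed

theorem corollary2p3:
  fixes V :: "'a::{ab_group_add, finite} set"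
    and P :: "nat \<Rightarrow> 'a set set"
    and v k r :: nat
  assumes "card (UNIV :: 'a set) = 2 * v + 1"
    and "2 * v + 1 \<ge> 7"
    and "heffter_space V k P r"
    and "card V = v"
    and "is_linear_space V (blocks P r)"
  shows "\<forall>p::nat. prime p \<and> p dvd 2 * v + 1 \<longrightarrow> int p dvd int r - 1"
proof (intro allI impI)
  fix p :: nat assume p: "prime p \<and> p dvd 2 * v + 1"
  have "\<not> card V \<le> Suc 0"
    using assms(2,4) by simp
  then obtain x y where xy: "x \<in> V" "y \<in> V" "x \<noteq> y"
    using card_le_Suc0_iff_eq[of V] by auto
  have "blocks P r \<noteq> {}"
    using assms(5) xy unfolding is_linear_space_def by blast
  then have "r > 0"
    by (auto simp: blocks_def)
  have "(\<Sum>i<r - 1. g) = 0" for g :: 'a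
  proof (rule half_set_exponent)
    show "half_set V" using assms(3) by (simp add: heffter_space_def)
    fix z assume "z \<in> V"
    then have "(\<Sum>i<Suc (r - 1). z) = z"
      using heffter_linear_space_point_multiple[OF _ assms(3,5)] \<open>r > 0\<close> by simp
    then show "(\<Sum>i<r - 1. z) = 0" by simp
  qed
  then have "p dvd r - 1"
    using prime_dvd_card_imp_dvd_exponent p assms(1) by metis
  then show "int p dvd int r - 1"
    using \<open>r > 0\<close> by (simp add: of_nat_diff flip: int_dvd_int_iff)
qed

end
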